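(* Let $M=\frac32-\sqrt2$ and for $\xi\in[0,1]$ define $$G_\xi(w,f)=(1-f)\,y\left(\tfrac12-y\right)+4M\xi\cdot\frac{w}{1-f},\qquad y=1-\frac{w}{1-f}.$$ Let $\kappa=\frac{1038}{1000}$. For all $w_1,w_2,w_3\in[0,\frac12]$ and $f_1,f_2,f_3\in[\frac1{13},\frac12]$ such that $\frac{1-f_i}{2}\le w_i\le 1-f_i$ for $i=1,2,3$, and for every $\xi\in[0,1]$, $$\tfrac12\bigl(G_\xi(w_1,f_1)+G_\xi(w_2,f_2)\bigr)\le\kappa\cdot G_\xi\!\left(\tfrac{w_1+w_2}{2},\tfrac{f_1+f_2}{2}\right),$$ $$\tfrac13\bigl(G_\xi(w_1,f_1)+G_\xi(w_2,f_2)+G_\xi(w_3,f_3)\bigr)\le\kappa\cdot G_\xi\!\left(\tfrac{w_1+w_2+w_3}{3},\tfrac{f_1+f_2+f_3}{3}\right).$$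
   Context: Here $(1-f)y(\frac12-y)$ with $y=1-\frac{w}{1-f}$ is the quantity $\frac{1-f}{\Phi(1-\frac w{1-f})}$ for the potential $\Phi(x)=\frac{1}{x(\frac12-x)}$; the constant $M=\frac32-\sqrt2$ equals $\sup_{0\le x\le 1/2}\frac{x(\frac12-x)}{1-x}$. *)

theory Defs
  imports Complex_Main
begin

definition M_const :: real where
  "M_const = 3/2 - sqrt 2"

definition G :: "real \<Rightarrow> real \<Rightarrow> real \<Rightarrow> real" where
  "G \<xi> w f = (let y = 1 - w / (1 - f) in
      (1 - f) * y * (1/2 - y) + 4 * M_const * \<xi> * (w / (1 - f)))"

definition kappa :: real where
  "kappa = 1038 / 1000"

end

theory Submission imports Defs begin

text \<open>Substituting \<open>s = 1 - f\<close> and \<open>u = w / s\<close> turns \<open>G\<close> into \<open>s (1 - u) (u - 1/2) + c u\<close> with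
  \<open>c = 4 M \<xi>\<close>, and the mean of \<open>n\<close> points becomes \<open>(V/n, 1 - P/n)\<close> with \<open>P = \<Sum> s\<^sub>i\<close>,
  \<open>V = \<Sum> s\<^sub>i u\<^sub>i\<close>. A weighted-variance identity writes \<open>P \<Sum> G\<^sub>i - n P G(mean)\<close> as half a double sum
  of pair terms \<open>c (u\<^sub>i - u\<^sub>j) (s\<^sub>j - s\<^sub>i) - s\<^sub>i s\<^sub>j (u\<^sub>i - u\<^sub>j)\<^sup>2\<close>. Completing the square bounds each
  by \<open>57/2000 \<cdot> c (s\<^sub>i + s\<^sub>j)\<close>, diagonal terms vanish, and \<open>n P G(mean) \<ge> n c P / 2\<close>; so averaging
  \<open>n\<close> points costs at most the factor \<open>1 + 57/1000 \<cdot> (n - 1)/n\<close>, which equals \<open>\<kappa>\<close> for \<open>n = 3\<close>.\<close>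

lemma M_const_bounds: "0 < 4 * M_const" "4 * M_const \<le> 3432/10000"
proof -
  have "sqrt 2 < 3/2" by (rule real_less_lsqrt) (auto simp: power2_eq_square)
  then show "0 < 4 * M_const" unfolding M_const_def by simp
  have "14142/10000 \<le> sqrt 2" by (rule real_le_rsqrt) (simp add: power2_eq_square)
  then show "4 * M_const \<le> 3432/10000" unfolding M_const_def by simp
qed

lemma sq_diff_le_cubic_ordered:
  fixes a b :: real
  assumes "a \<in> {1/2..12/13}" "b \<in> {1/2..12/13}" "a \<le> b"
  shows "(b - a)^2 \<le> 33/100 * (a * b * (a + b))"
proof -
  have "(b - a)^2 \<le> 11/26 * (b - a)" unfolding power2_eq_square
    using assms by (intro mult_right_mono) auto
  moreover have "a * b * (a + b) \<ge> b/4 + b * b/2"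
  proof -
    have "a * a \<ge> 1/4" "a * b \<ge> b/2" using assms mult_mono[of "1/2" a "1/2" a] by auto
    then have "b * (a * a) + b * (a * b) \<ge> b * (1/4) + b * (b/2)" using assms
      by (intro add_mono mult_left_mono) auto
    then show ?thesis by (simp add: algebra_simps)
  qed
  moreover have "b * b \<ge> 24/13 * b - 144/169"
    using sum_squares_ge_zero[of "b - 12/13" 0] by (simp add: power2_eq_square algebra_simps)
  ultimately show ?thesis using assms by simp
qed

lemma sq_diff_le_cubic:
  fixes a b :: real
  assumes "a \<in> {1/2..12/13}" "b \<in> {1/2..12/13}"
  shows "(b - a)^2 \<le> 33/100 * (a * b * (a + b))"
  using sq_diff_le_cubic_ordered[OF assms] sq_diff_le_cubic_ordered[OF assms(2,1)]
  by (cases "a \<le> b") (auto simp: power2_commute algebra_simps)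

lemma pair_defect_le:
  fixes a b c p q :: real
  assumes a: "a \<in> {1/2..12/13}" and b: "b \<in> {1/2..12/13}" and c: "0 \<le> c" "c \<le> 3432/10000"
  shows "c * (p - q) * (b - a) - a * b * (p - q)^2 \<le> 57/2000 * c * (a + b)"
proof -
  have ab: "a * b > 0" and abp: "a * b * (a + b) \<ge> 0" using a b by auto
  \<comment> \<open>complete the square in \<open>p - q\<close>\<close>
  have "4 * (a * b) * (c * (p - q) * (b - a) - a * b * (p - q)^2)
      = c^2 * (b - a)^2 - (2 * (a * b) * (p - q) - c * (b - a))^2"
    by (simp add: power2_eq_square algebra_simps)
  also have "\<dots> \<le> c * (c * (b - a)^2)" by (simp add: power2_eq_square)
  also have "\<dots> \<le> c * (3432/10000 * (33/100 * (a * b * (a + b))))"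
    using c sq_diff_le_cubic[OF a b] abp
    by (intro mult_left_mono mult_mono) auto
  also have "\<dots> = 113256/1000000 * (c * (a * b * (a + b)))" by simp
  also have "\<dots> \<le> 114/1000 * (c * (a * b * (a + b)))"
    using c abp by (intro mult_right_mono) auto
  also have "\<dots> = 4 * (a * b) * (57/2000 * c * (a + b))" by (simp add: algebra_simps)
  finally have "4 * (a * b) * (c * (p - q) * (b - a) - a * b * (p - q)^2)
      \<le> 4 * (a * b) * (57/2000 * c * (a + b))" .
  then show ?thesis by (rule mult_left_le_imp_le) (use ab in simp)
qed

lemma weighted_defect_identity:
  fixes s u :: "'a \<Rightarrow> real" and c :: real
  assumes "finite I"
  shows "(\<Sum>i\<in>I. s i) * (\<Sum>i\<in>I. s i * (1 - u i) * (u i - 1/2) + c * u i)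
       - ((\<Sum>i\<in>I. s i - s i * u i) * (\<Sum>i\<in>I. s i * u i - s i / 2)
          + real (card I) * c * (\<Sum>i\<in>I. s i * u i))
     = (\<Sum>i\<in>I. \<Sum>j\<in>I. c * (u i - u j) * (s j - s i) - s i * s j * (u i - u j)^2) / 2"
proof -
  define g where "g i = s i * (1 - u i) * (u i - 1/2) + c * u i" for i
  define h where "h i j = s i * g j - (s i - s i * u i) * (s j * u j - s j / 2) - c * (s j * u j)"
    for i j
  have "(\<Sum>i\<in>I. s i) * (\<Sum>i\<in>I. g i) = (\<Sum>i\<in>I. \<Sum>j\<in>I. s i * g j)"
    by (rule sum_product)
  moreover have "(\<Sum>i\<in>I. s i - s i * u i) * (\<Sum>i\<in>I. s i * u i - s i / 2)
      = (\<Sum>i\<in>I. \<Sum>j\<in>I. (s i - s i * u i) * (s j * u j - s j / 2))"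
    by (rule sum_product)
  moreover have "real (card I) * c * (\<Sum>i\<in>I. s i * u i) = (\<Sum>i\<in>I. \<Sum>j\<in>I. c * (s j * u j))"
    by (simp add: sum_distrib_left mult.assoc)
  ultimately have "(\<Sum>i\<in>I. s i) * (\<Sum>i\<in>I. g i)
       - ((\<Sum>i\<in>I. s i - s i * u i) * (\<Sum>i\<in>I. s i * u i - s i / 2)
          + real (card I) * c * (\<Sum>i\<in>I. s i * u i))
     = (\<Sum>i\<in>I. \<Sum>j\<in>I. h i j)"
    by (simp add: h_def sum_subtractf)
  also have "\<dots> = ((\<Sum>i\<in>I. \<Sum>j\<in>I. h i j) + (\<Sum>i\<in>I. \<Sum>j\<in>I. h j i)) / 2"
    using sum.swap[of h I I] by simp
  also have "\<dots> = (\<Sum>i\<in>I. \<Sum>j\<in>I. c * (u i - u j) * (s j - s i) - s i * s j * (u i - u j)^2) / 2"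
    unfolding sum.distrib[symmetric] h_def g_def
    by (intro arg_cong[where f = "\<lambda>x. x / 2"] sum.cong refl) (simp add: power2_eq_square algebra_simps)
  finally show ?thesis unfolding g_def .
qed

lemma pair_defects_sum_le:
  fixes s u :: "'a \<Rightarrow> real" and c :: real
  assumes "finite I" and s: "\<forall>i\<in>I. s i \<in> {1/2..12/13}" and c: "0 \<le> c" "c \<le> 3432/10000"
  shows "(\<Sum>i\<in>I. \<Sum>j\<in>I. c * (u i - u j) * (s j - s i) - s i * s j * (u i - u j)^2)
    \<le> 57/1000 * (real (card I) - 1) * c * (\<Sum>i\<in>I. s i)"
proof -
  \<comment> \<open>diagonal terms vanish, so their share of the bound is subtracted again\<close>
  have "(\<Sum>i\<in>I. \<Sum>j\<in>I. c * (u i - u j) * (s j - s i) - s i * s j * (u i - u j)^2)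
      \<le> (\<Sum>i\<in>I. \<Sum>j\<in>I. 57/2000 * c * (s i + s j) - (if i = j then 57/1000 * c * s i else 0))"
    using pair_defect_le[of "s _" "s _" c] s c by (intro sum_mono) auto
  also have "\<dots> = 57/2000 * c * (\<Sum>i\<in>I. \<Sum>j\<in>I. s i + s j) - 57/1000 * c * (\<Sum>i\<in>I. s i)"
    using \<open>finite I\<close> by (simp add: sum_subtractf sum_distrib_left sum.delta)
  also have "(\<Sum>i\<in>I. \<Sum>j\<in>I. s i + s j) = 2 * real (card I) * (\<Sum>i\<in>I. s i)"
    by (simp add: sum.distrib sum_distrib_left[symmetric])
  finally show ?thesis by (simp add: algebra_simps)
qed

lemma weighted_mean_bound:
  fixes s u :: "'a \<Rightarrow> real" and c k :: real
  assumes "finite I" "I \<noteq> {}"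
    and s: "\<forall>i\<in>I. s i \<in> {1/2..12/13}" and u: "\<forall>i\<in>I. u i \<in> {1/2..1}"
    and c: "0 \<le> c" "c \<le> 3432/10000"
    and k: "1 + 57/1000 * (real (card I) - 1) / real (card I) \<le> k"
  shows "(\<Sum>i\<in>I. s i) * (\<Sum>i\<in>I. s i * (1 - u i) * (u i - 1/2) + c * u i)
    \<le> k * (((\<Sum>i\<in>I. s i) - (\<Sum>i\<in>I. s i * u i)) * ((\<Sum>i\<in>I. s i * u i) - (\<Sum>i\<in>I. s i) / 2)
          + real (card I) * c * (\<Sum>i\<in>I. s i * u i))"
proof -
  define n where "n = real (card I)"
  define P where "P = (\<Sum>i\<in>I. s i)"
  define V where "V = (\<Sum>i\<in>I. s i * u i)"
  define E where "E = (P - V) * (V - P / 2) + n * c * V"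
  have n: "n \<ge> 1" using assms(1,2) unfolding n_def by (simp add: Suc_leI card_gt_0_iff)
  have "P / 2 \<le> V" "V \<le> P"
    using s u unfolding P_def V_def sum_divide_distrib
    by (auto intro!: sum_mono simp: mult_left_mono[of _ 1, simplified] mult_left_mono)
  then have "0 \<le> (P - V) * (V - P / 2)" and "n * c * (P / 2) \<le> n * c * V"
    using c n by (auto intro: mult_left_mono)
  then have E: "n * (c * P) / 2 \<le> E" unfolding E_def by simp
  have "0 \<le> P" unfolding P_def by (rule sum_nonneg) (use s in auto)
  then have "0 \<le> n * (c * P) / 2" using n c by simp
  with E have "0 \<le> E" by linarith
  have "P * (\<Sum>i\<in>I. s i * (1 - u i) * (u i - 1/2) + c * u i) - E
      \<le> 57/2000 * (n - 1) * (c * P)"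
    using weighted_defect_identity[OF assms(1), of s u c] pair_defects_sum_le[OF assms(1) s c, of u]
    unfolding E_def P_def V_def n_def sum_subtractf sum_divide_distrib by simp
  also have "\<dots> = 57/1000 * (n - 1) / n * (n * (c * P) / 2)" using n by simp
  also have "\<dots> \<le> 57/1000 * (n - 1) / n * E" using E n by (intro mult_left_mono) auto
  finally have "P * (\<Sum>i\<in>I. s i * (1 - u i) * (u i - 1/2) + c * u i)
      \<le> (1 + 57/1000 * (n - 1) / n) * E" by (simp add: algebra_simps)
  also have "\<dots> \<le> k * E"
    using k \<open>0 \<le> E\<close> unfolding n_def by (rule mult_right_mono)
  finally show ?thesis unfolding E_def P_def V_def n_def .
qed

lemma G_scaled:
  assumes "0 < s"
  shows "G \<xi> (s * u) (1 - s) = s * (1 - u) * (u - 1/2) + 4 * M_const * \<xi> * u"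
  unfolding G_def Let_def using assms by (simp add: algebra_simps)

lemma G_at_mean:
  fixes n P V :: real
  assumes "0 < n" "0 < P"
  shows "n * P * G \<xi> (V / n) (1 - P / n) = (P - V) * (V - P / 2) + n * (4 * M_const * \<xi>) * V"
  unfolding G_def Let_def using assms by (simp add: field_simps power2_eq_square)

lemma G_mean_le:
  fixes w f :: "'a \<Rightarrow> real" and \<xi> k :: real
  assumes "finite I" "I \<noteq> {}"
    and wf: "\<forall>i\<in>I. f i \<in> {1/13..1/2} \<and> (1 - f i) / 2 \<le> w i \<and> w i \<le> 1 - f i"
    and \<xi>: "\<xi> \<in> {0..1}"
    and k: "1 + 57/1000 * (real (card I) - 1) / real (card I) \<le> k"
  shows "(\<Sum>i\<in>I. G \<xi> (w i) (f i)) / card I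
    \<le> k * G \<xi> ((\<Sum>i\<in>I. w i) / card I) ((\<Sum>i\<in>I. f i) / card I)"
proof -
  define n where "n = real (card I)"
  define s where "s i = 1 - f i" for i
  define u where "u i = w i / s i" for i
  define c where "c = 4 * M_const * \<xi>"
  have s: "\<forall>i\<in>I. s i \<in> {1/2..12/13}" and u: "\<forall>i\<in>I. u i \<in> {1/2..1}"
    using wf by (auto simp: s_def u_def field_simps)
  have w: "w i = s i * u i" if "i \<in> I" for i
    using wf that by (auto simp: s_def u_def)
  have G_i: "G \<xi> (w i) (f i) = s i * (1 - u i) * (u i - 1/2) + c * u i" if "i \<in> I" for i
  proof -
    have "f i = 1 - s i" "0 < s i" using s that by (auto simp: s_def)
    then show ?thesis by (simp add: w[OF that] G_scaled c_def)
  qed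
  have c: "0 \<le> c" "c \<le> 3432/10000"
  proof -
    show "0 \<le> c" using M_const_bounds(1) \<xi> by (simp add: c_def)
    have "c \<le> 4 * M_const" unfolding c_def using M_const_bounds(1) \<xi> by (intro mult_left_le) auto
    then show "c \<le> 3432/10000" using M_const_bounds(2) by linarith
  qed
  have n: "0 < n" and P: "0 < (\<Sum>i\<in>I. s i)"
    using assms(1,2) s by (auto simp: n_def card_gt_0_iff intro!: sum_pos)
  have "(\<Sum>i\<in>I. s i) * (\<Sum>i\<in>I. G \<xi> (w i) (f i))
      = (\<Sum>i\<in>I. s i) * (\<Sum>i\<in>I. s i * (1 - u i) * (u i - 1/2) + c * u i)"
    by (simp add: G_i)
  also have "\<dots> \<le> k * (n * (\<Sum>i\<in>I. s i) * G \<xi> ((\<Sum>i\<in>I. s i * u i) / n) (1 - (\<Sum>i\<in>I. s i) / n))"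
    unfolding G_at_mean[OF n P] c_def[symmetric] unfolding n_def
    by (rule weighted_mean_bound[OF assms(1,2) s u c k])
  also have "(1 - (\<Sum>i\<in>I. s i) / n) = (\<Sum>i\<in>I. f i) / n"
    using n by (simp add: s_def n_def sum_subtractf field_simps)
  finally have "(\<Sum>i\<in>I. s i) * (\<Sum>i\<in>I. G \<xi> (w i) (f i))
      \<le> (\<Sum>i\<in>I. s i) * (n * (k * G \<xi> ((\<Sum>i\<in>I. w i) / n) ((\<Sum>i\<in>I. f i) / n)))"
    by (simp add: w mult_ac)
  then show ?thesis
    using n P unfolding n_def[symmetric] by (simp add: pos_divide_le_eq mult_ac)
qed

theorem lemma18:
  fixes w1 w2 w3 f1 f2 f3 \<xi> :: real
  assumes "w1 \<in> {0..1/2}" "w2 \<in> {0..1/2}" "w3 \<in> {0..1/2}"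
    and "f1 \<in> {1/13..1/2}" "f2 \<in> {1/13..1/2}" "f3 \<in> {1/13..1/2}"
    and "(1 - f1) / 2 \<le> w1" "w1 \<le> 1 - f1"
    and "(1 - f2) / 2 \<le> w2" "w2 \<le> 1 - f2"
    and "(1 - f3) / 2 \<le> w3" "w3 \<le> 1 - f3"
    and "\<xi> \<in> {0..1}"
  shows "(G \<xi> w1 f1 + G \<xi> w2 f2) / 2 \<le> kappa * G \<xi> ((w1 + w2) / 2) ((f1 + f2) / 2)
    \<and> (G \<xi> w1 f1 + G \<xi> w2 f2 + G \<xi> w3 f3) / 3
           \<le> kappa * G \<xi> ((w1 + w2 + w3) / 3) ((f1 + f2 + f3) / 3)"
proof -
  define w where "w = (!) [w1, w2, w3]"
  define f where "f = (!) [f1, f2, f3]"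
  have wf3: "\<forall>i\<in>{..<3}. f i \<in> {1/13..1/2} \<and> (1 - f i) / 2 \<le> w i \<and> w i \<le> 1 - f i"
    using assms by (auto simp: w_def f_def lessThan_Suc numeral_3_eq_3)
  then have wf2: "\<forall>i\<in>{..<2}. f i \<in> {1/13..1/2} \<and> (1 - f i) / 2 \<le> w i \<and> w i \<le> 1 - f i"
    by auto
  have "(\<Sum>i\<in>{..<2}. G \<xi> (w i) (f i)) / 2
      \<le> kappa * G \<xi> ((\<Sum>i\<in>{..<2}. w i) / 2) ((\<Sum>i\<in>{..<2}. f i) / 2)"
    using G_mean_le[of "{..<2::nat}" f w \<xi> kappa] wf2 assms(13) by (simp add: kappa_def lessThan_empty_iff)
  moreover have "(\<Sum>i\<in>{..<3}. G \<xi> (w i) (f i)) / 3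
      \<le> kappa * G \<xi> ((\<Sum>i\<in>{..<3}. w i) / 3) ((\<Sum>i\<in>{..<3}. f i) / 3)"
    using G_mean_le[of "{..<3::nat}" f w \<xi> kappa] wf3 assms(13) by (simp add: kappa_def lessThan_empty_iff)
  ultimately show ?thesis by (simp add: w_def f_def numeral_2_eq_2 numeral_3_eq_3 add_ac)
qed

end
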